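(* Let $q\in\mathbb{C}\setminus\{0\}$ be not a root of unity, let $\lambda,\mu$ be strict partitions with $|\lambda|=|\mu|=n$, let $\Lambda\in\mathcal S_\lambda$, $\Gamma\in\mathcal S_\mu$, and let $\nu_1,\nu_2\in\{-1,1\}^n$. If $\big((q_k^\Lambda)^{\nu_1(k)}\big)_{k=1}^n=\big((q_k^\Gamma)^{\nu_2(k)}\big)_{k=1}^n$, then $\Lambda=\Gamma$. In particular $P(\lambda)\cap P(\mu)=\emptyset$ if $\lambda\neq\mu$.
   Context: $[m]_{q^2}=(q^{2m}-q^{-2m})/(q^2-q^{-2})$; for each integer $m\ge0$ a square root $s_m$ of $[m+1]_{q^2}[m]_{q^2}$ is fixed once and for all and $x_m=[m+1]_{q^2}-[m]_{q^2}-(q-q^{-1})s_m$. For a strict partition $\lambda$ (distinct positive parts), the shifted diagram has boxes $(i,j)$ with $i\le j\le i+\lambda_i-1$; $\mathcal S_\lambda$ is the set of standard shifted tableaux (fillings by $1,\dots,|\lambda|$ increasing along rows and columns). For $\Lambda\in\mathcal S_\lambda$ and $k$, let $(i_k,j_k)$ be the box containing $k$ and $q_k^\Lambda=x_{j_k-i_k}$. $P(\lambda)$ denotes the set of weights of the Jones–Nazarov $G_n$-module $V_\lambda$ with respect to its commuting Jucys–Murphy elements; concretely $P(\lambda)=\{((q_k^\Lambda)^{\nu(k)})_{k=1}^n:\Lambda\in\mathcal S_\lambda,\ \nu\in\{\pm1\}^n\}$. *)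

theory Defs
  imports Complex_Main
begin

definition qint :: "complex \<Rightarrow> nat \<Rightarrow> complex" where
  "qint q m = (q ^ (2*m) - inverse q ^ (2*m)) / (q ^ 2 - inverse q ^ 2)"

definition sqrt_choice :: "complex \<Rightarrow> (nat \<Rightarrow> complex) \<Rightarrow> bool" where
  "sqrt_choice q s \<longleftrightarrow> (\<forall>m. (s m) ^ 2 = qint q (m+1) * qint q m)"

definition xval :: "complex \<Rightarrow> (nat \<Rightarrow> complex) \<Rightarrow> nat \<Rightarrow> complex" where
  "xval q s m = qint q (m+1) - qint q m - (q - inverse q) * s m"

definition strict_partition :: "nat list \<Rightarrow> bool" where
  "strict_partition la \<longleftrightarrow> sorted_wrt (>) la \<and> (\<forall>x\<in>set la. 0 < x)"

text \<open>Shifted diagram, rows and columns 1-indexed: (i,j) with i \<le> j \<le> i + la_i - 1.\<close>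
definition shifted_diagram :: "nat list \<Rightarrow> (nat \<times> nat) set" where
  "shifted_diagram la = {(i,j). 1 \<le> i \<and> i \<le> length la \<and> i \<le> j \<and> j + 1 \<le> i + la ! (i - 1)}"

definition std_shifted_tableaux :: "nat list \<Rightarrow> (nat \<times> nat \<Rightarrow> nat) set" where
  "std_shifted_tableaux la = {T.
     bij_betw T (shifted_diagram la) {1..sum_list la} \<and>
     (\<forall>b. b \<notin> shifted_diagram la \<longrightarrow> T b = 0) \<and>
     (\<forall>i j. (i,j) \<in> shifted_diagram la \<and> (i,j+1) \<in> shifted_diagram la \<longrightarrow> T (i,j) < T (i,j+1)) \<and>
     (\<forall>i j. (i,j) \<in> shifted_diagram la \<and> (i+1,j) \<in> shifted_diagram la \<longrightarrow> T (i,j) < T (i+1,j))}"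

text \<open>q_k^T = x_{j_k - i_k}, where (i_k,j_k) is the box of T containing k.\<close>
definition qk :: "complex \<Rightarrow> (nat \<Rightarrow> complex) \<Rightarrow> nat list \<Rightarrow> (nat \<times> nat \<Rightarrow> nat) \<Rightarrow> nat \<Rightarrow> complex" where
  "qk q s la T k = (case the_inv_into (shifted_diagram la) T k of (i,j) \<Rightarrow> xval q s (j - i))"

definition sign_vec :: "nat \<Rightarrow> (nat \<Rightarrow> int) \<Rightarrow> bool" where
  "sign_vec n nu \<longleftrightarrow> (\<forall>k\<in>{1..n}. nu k = 1 \<or> nu k = -1)"

definition weight :: "complex \<Rightarrow> (nat \<Rightarrow> complex) \<Rightarrow> nat list \<Rightarrow> (nat \<times> nat \<Rightarrow> nat) \<Rightarrow> (nat \<Rightarrow> int) \<Rightarrow> complex list" where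
  "weight q s la T nu = map (\<lambda>k. qk q s la T k powi nu k) [1..<sum_list la + 1]"

definition weights :: "complex \<Rightarrow> (nat \<Rightarrow> complex) \<Rightarrow> nat list \<Rightarrow> complex list set" where
  "weights q s la = {weight q s la T nu | T nu. T \<in> std_shifted_tableaux la \<and> sign_vec (sum_list la) nu}"

end

theory Submission
  imports Defs
begin

text \<open>Writing a_m = [m+1] - [m], the identity a_m^2 - (q - q^-1)^2 [m+1][m] = 1 says that
  x_m (a_m + (q - q^-1) s_m) = 1, so x_m + x_m^-1 = 2 a_m whichever sign is applied to x_m.
  If q is not a root of unity, m \<mapsto> a_m is injective, so a weight determines the content
  j_k - i_k of the box containing each k. In a standard shifted tableau the entries increase
  down each diagonal, and for a strict partition the boxes of a diagonal occupy an initial segment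
  of rows; hence the box containing k lies in the row one below the number of k' < k of the same
  content. So the contents determine the boxes, hence the tableau and its diagram, and the
  diagram determines the strict partition.\<close>

lemma power_inject_exp_non_root_of_unity:
  fixes q :: "'a::idom"
  assumes "q \<noteq> 0" and "\<forall>m. 0 < m \<longrightarrow> q ^ m \<noteq> 1" and "q ^ a = q ^ b"
  shows "a = b"
proof -
  have False if "a < b" "q ^ a = q ^ b" for a b
  proof -
    have "q ^ a * q ^ (b - a) = q ^ b"
      using \<open>a < b\<close> by (simp flip: power_add)
    then have "q ^ (b - a) = 1" using that \<open>q \<noteq> 0\<close> by simp
    then show False using assms(2) \<open>a < b\<close> by simp
  qed
  then show ?thesis using assms(3) by (metis linorder_neqE_nat)
qed

lemma qint_denominator_nonzero:
  fixes q :: "'a::field"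
  assumes "q \<noteq> 0" and "\<forall>m. 0 < m \<longrightarrow> q ^ m \<noteq> 1"
  shows "q^2 - inverse q^2 \<noteq> 0"
proof
  assume "q^2 - inverse q^2 = 0"
  then have "q^2 * q^2 = 1" using \<open>q \<noteq> 0\<close> by (simp add: field_simps)
  then have "q^4 = 1" by (simp flip: power_add)
  then show False using assms(2) by simp
qed

lemma qint_eq: "qint q m = (q^(2*m) - inverse (q^(2*m))) / (q^2 - inverse q^2)"
  by (simp add: qint_def power_inverse)

lemma qint_Suc_eq: "qint q (Suc m) = (q^(2*m) * q^2 - inverse (q^(2*m) * q^2)) / (q^2 - inverse q^2)"
proof -
  have "q^(2 * Suc m) = q^(2*m) * q^2" by (simp flip: power_add)
  then show ?thesis by (simp only: qint_eq)
qed

definition qint_step :: "complex \<Rightarrow> nat \<Rightarrow> complex" where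
  "qint_step q m = qint q (Suc m) - qint q m"

lemma qint_step_eq:
  "qint_step q m = (q^(2*m) * q^2 - inverse (q^(2*m) * q^2) - (q^(2*m) - inverse (q^(2*m))))
     / (q^2 - inverse q^2)"
  unfolding qint_step_def qint_Suc_eq unfolding qint_eq by (simp only: diff_divide_distrib)

text \<open>r and R stand for q^-1 and P^-1 with P = q^(2m), eliminated as ring elements so that
  the Groebner basis method applies.\<close>
lemma qint_step_square_numerator:
  fixes q r P R :: "'a::idom"
  assumes "q * r = 1" and "P * R = 1"
  shows "(P*q^2 - R*r^2 - (P - R))^2 - (q - r)^2 * ((P*q^2 - R*r^2) * (P - R)) = (q^2 - r^2)^2"
  using assms by algebra

lemma qint_step_square:
  assumes "q \<noteq> 0" and "q^2 - inverse q^2 \<noteq> 0"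
  shows "qint_step q m ^ 2 - (q - inverse q)^2 * (qint q (Suc m) * qint q m) = 1"
proof -
  define P where "P = q^(2*m)"
  define D where "D = q^2 - inverse q^2"
  have "q * inverse q = 1" "P * inverse P = 1" using assms(1) by (simp_all add: P_def)
  note numerator = qint_step_square_numerator[OF this]
  have "(P*q^2 - inverse (P*q^2) - (P - inverse P))^2
      - (q - inverse q)^2 * ((P*q^2 - inverse (P*q^2)) * (P - inverse P)) = D^2"
    using numerator by (simp add: D_def power_inverse)
  moreover have "D \<noteq> 0" using assms(2) by (simp add: D_def)
  moreover have "(C/D - F/D)^2 - B * (C/D * (F/D)) = 1"
    if "(C - F)^2 - B * (C * F) = D^2" "D \<noteq> 0" for B C F :: complex
    using that by (simp add: field_simps power2_eq_square)
  ultimately show ?thesis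
    unfolding qint_step_def qint_Suc_eq unfolding qint_eq P_def[symmetric] D_def[symmetric]
    by blast
qed

lemma qint_step_eq_numerator:
  fixes q r P R P' R' :: "'a::idom"
  assumes "q * r = 1" and "P * R = 1" and "P' * R' = 1"
    and "P*q^2 - R*r^2 - (P - R) = P'*q^2 - R'*r^2 - (P' - R')"
  shows "(P - P') * (q^2 - 1) * (P * P' * q^2 - 1) = 0"
  using assms by algebra

lemma qint_step_inj:
  assumes "q \<noteq> 0" and "\<forall>m. 0 < m \<longrightarrow> q ^ m \<noteq> 1" and "qint_step q m = qint_step q m'"
  shows "m = m'"
proof -
  define P P' where "P = q^(2*m)" and "P' = q^(2*m')"
  have "q * inverse q = 1" "P * inverse P = 1" "P' * inverse P' = 1"
    using assms(1) by (simp_all add: P_def P'_def)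
  moreover have "P*q^2 - inverse P * inverse q^2 - (P - inverse P)
      = P'*q^2 - inverse P' * inverse q^2 - (P' - inverse P')"
    using assms(3) qint_denominator_nonzero[OF assms(1,2)]
    unfolding qint_step_eq P_def[symmetric] P'_def[symmetric] by (simp add: power_inverse)
  ultimately have "(P - P') * (q^2 - 1) * (P * P' * q^2 - 1) = 0"
    by (rule qint_step_eq_numerator)
  moreover have "q^2 \<noteq> 1" using assms(2)[rule_format, of 2] by simp
  ultimately have "P = P' \<or> P * P' * q^2 = 1" by simp
  then consider "q^(2*m) = q^(2*m')" | "q^(2*m + 2*m' + 2) = 1"
    unfolding P_def P'_def by (auto simp flip: power_add)
  then show ?thesis
  proof cases
    case 1
    show ?thesis using power_inject_exp_non_root_of_unity[OF assms(1,2) 1] by simp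
  next
    case 2
    then show ?thesis using assms(2)[rule_format, of "2*m + 2*m' + 2"] by simp
  qed
qed

lemma xval_mult_conjugate:
  assumes "q \<noteq> 0" and "q^2 - inverse q^2 \<noteq> 0" and "sqrt_choice q s"
  shows "xval q s m * (qint_step q m + (q - inverse q) * s m) = 1"
proof -
  have "xval q s m = qint_step q m - (q - inverse q) * s m"
    by (simp add: xval_def qint_step_def)
  moreover have "(a - b) * (a + b) = a^2 - b^2" for a b :: complex
    by (simp add: power2_eq_square algebra_simps)
  moreover have "((q - inverse q) * s m)^2 = (q - inverse q)^2 * (qint q (Suc m) * qint q m)"
    using assms(3) by (simp add: sqrt_choice_def power_mult_distrib)
  ultimately show ?thesis
    using qint_step_square[OF assms(1,2), of m] by simp
qed

lemma powi_sign_add_inverse: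
  fixes z :: "'a::field"
  assumes "e = 1 \<or> e = -1"
  shows "z powi e + inverse (z powi e) = z + inverse z"
  using assms by (auto simp: power_int_minus)

lemma xval_add_inverse:
  assumes "q \<noteq> 0" and "q^2 - inverse q^2 \<noteq> 0" and "sqrt_choice q s"
  shows "xval q s m + inverse (xval q s m) = 2 * qint_step q m"
proof -
  have "inverse (xval q s m) = qint_step q m + (q - inverse q) * s m"
    using xval_mult_conjugate[OF assms] by (rule inverse_unique)
  then show ?thesis by (simp add: xval_def qint_step_def)
qed

lemma xval_powi_inj:
  assumes "q \<noteq> 0" and "\<forall>m. 0 < m \<longrightarrow> q ^ m \<noteq> 1" and "sqrt_choice q s"
    and "e = 1 \<or> e = -1" and "e' = 1 \<or> e' = -1"
    and "xval q s m powi e = xval q s m' powi e'"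
  shows "m = m'"
proof (rule qint_step_inj[OF assms(1,2)])
  note add_inverse = xval_add_inverse[OF assms(1) qint_denominator_nonzero[OF assms(1,2)] assms(3)]
  have "2 * qint_step q m = xval q s m powi e + inverse (xval q s m powi e)"
    by (simp only: powi_sign_add_inverse[OF assms(4)] add_inverse)
  also have "\<dots> = xval q s m' powi e' + inverse (xval q s m' powi e')"
    by (simp only: assms(6))
  also have "\<dots> = 2 * qint_step q m'"
    by (simp only: powi_sign_add_inverse[OF assms(5)] add_inverse)
  finally show "qint_step q m = qint_step q m'" by simp
qed

definition box_of :: "nat list \<Rightarrow> (nat \<times> nat \<Rightarrow> nat) \<Rightarrow> nat \<Rightarrow> nat \<times> nat" where
  "box_of la T k = the_inv_into (shifted_diagram la) T k"

definition content :: "nat list \<Rightarrow> (nat \<times> nat \<Rightarrow> nat) \<Rightarrow> nat \<Rightarrow> nat" where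
  "content la T k = (case box_of la T k of (i, j) \<Rightarrow> j - i)"

lemma qk_eq_xval_content: "qk q s la T k = xval q s (content la T k)"
  by (simp add: qk_def content_def box_of_def split: prod.split)

lemma tableau_bij:
  "T \<in> std_shifted_tableaux la \<Longrightarrow> bij_betw T (shifted_diagram la) {1..sum_list la}"
  by (simp add: std_shifted_tableaux_def)

lemma tableau_eq_0:
  "T \<in> std_shifted_tableaux la \<Longrightarrow> b \<notin> shifted_diagram la \<Longrightarrow> T b = 0"
  by (cases b) (simp add: std_shifted_tableaux_def)

lemma bij_betw_box_of:
  "T \<in> std_shifted_tableaux la \<Longrightarrow> bij_betw (box_of la T) {1..sum_list la} (shifted_diagram la)"
  unfolding box_of_def by (intro bij_betw_the_inv_into tableau_bij)

lemma tableau_box_of: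
  "T \<in> std_shifted_tableaux la \<Longrightarrow> k \<in> {1..sum_list la} \<Longrightarrow> T (box_of la T k) = k"
  unfolding box_of_def by (meson f_the_inv_into_f_bij_betw tableau_bij)

lemma box_of_tableau:
  "T \<in> std_shifted_tableaux la \<Longrightarrow> b \<in> shifted_diagram la \<Longrightarrow> box_of la T (T b) = b"
  unfolding box_of_def by (meson bij_betw_imp_inj_on the_inv_into_f_f tableau_bij)

lemma content_tableau:
  "T \<in> std_shifted_tableaux la \<Longrightarrow> (i, j) \<in> shifted_diagram la \<Longrightarrow> content la T (T (i, j)) = j - i"
  by (simp add: content_def box_of_tableau)

lemma strict_partition_nth_less:
  "strict_partition la \<Longrightarrow> i < i' \<Longrightarrow> i' < length la \<Longrightarrow> la ! i' < la ! i"
  unfolding strict_partition_def by (auto simp: sorted_wrt_iff_nth_less)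

lemma shifted_diagram_diagonal_up:
  assumes "strict_partition la" and "(i, i + d) \<in> shifted_diagram la" and "1 \<le> i'" and "i' \<le> i"
  shows "(i', i' + d) \<in> shifted_diagram la"
proof -
  have "la ! (i - 1) \<le> la ! (i' - 1)"
  proof (cases "i' = i")
    case False
    then have "i' - 1 < i - 1" and "i - 1 < length la"
      using assms(2-4) by (auto simp: shifted_diagram_def)
    then show ?thesis using strict_partition_nth_less[OF assms(1)] by fastforce
  qed simp
  then show ?thesis using assms by (auto simp: shifted_diagram_def)
qed

lemma tableau_diagonal_step:
  assumes "strict_partition la" and "T \<in> std_shifted_tableaux la"
    and "(Suc i, Suc i + d) \<in> shifted_diagram la" and "1 \<le> i"
  shows "T (i, i + d) < T (Suc i, Suc i + d)"
proof -
  have "la ! i < la ! (i - 1)"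
    using strict_partition_nth_less[OF assms(1), of "i - 1" i] assms(3,4)
    by (simp add: shifted_diagram_def)
  then have "(i, i + d) \<in> shifted_diagram la" "(i, Suc (i + d)) \<in> shifted_diagram la"
    using assms(3,4) by (auto simp: shifted_diagram_def)
  then have "T (i, i + d) < T (i, Suc (i + d))" and "T (i, Suc (i + d)) < T (Suc i, Suc (i + d))"
    using assms(2,3) by (auto simp: std_shifted_tableaux_def)
  then show ?thesis by simp
qed

lemma tableau_diagonal_less:
  assumes "strict_partition la" and "T \<in> std_shifted_tableaux la"
    and "(i, i + d) \<in> shifted_diagram la" and "1 \<le> i'" and "i' < i"
  shows "T (i', i' + d) < T (i, i + d)"
  using assms(3,5)
proof (induction i)
  case (Suc i)
  have step: "T (i, i + d) < T (Suc i, Suc i + d)"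
    using tableau_diagonal_step[OF assms(1,2)] Suc.prems assms(4) by simp
  show ?case
  proof (cases "i' = i")
    case False
    have "(i, i + d) \<in> shifted_diagram la"
      using shifted_diagram_diagonal_up[OF assms(1) Suc.prems(1)] assms(4) Suc.prems by simp
    then show ?thesis using Suc.IH False Suc.prems step by simp
  qed (use step in simp)
qed simp

lemma tableau_diagonal_less_iff:
  assumes "strict_partition la" and "T \<in> std_shifted_tableaux la"
    and "(i, i + d) \<in> shifted_diagram la" and "(i', i' + d) \<in> shifted_diagram la"
  shows "T (i', i' + d) < T (i, i + d) \<longleftrightarrow> i' < i"
  using tableau_diagonal_less[OF assms(1,2,3)] tableau_diagonal_less[OF assms(1,2,4), of i] assms(3,4)
  by (cases i i' rule: linorder_cases) (auto simp: shifted_diagram_def)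

lemma earlier_same_content_eq_diagonal:
  assumes "strict_partition la" and "T \<in> std_shifted_tableaux la"
    and "(i, i + d) \<in> shifted_diagram la"
  shows "{k \<in> {1..<T (i, i + d)}. content la T k = d} = (\<lambda>i'. T (i', i' + d)) ` {1..<i}"
proof (intro equalityI subsetI)
  fix k assume k: "k \<in> {k \<in> {1..<T (i, i + d)}. content la T k = d}"
  have "T (i, i + d) \<le> sum_list la"
    using assms(3) tableau_bij[OF assms(2)] by (auto simp: bij_betw_def)
  then have k_range: "k \<in> {1..sum_list la}" using k by auto
  obtain i' j' where box: "box_of la T k = (i', j')" by fastforce
  have in_diagram: "(i', j') \<in> shifted_diagram la" and "T (i', j') = k"
    using bij_betw_apply[OF bij_betw_box_of[OF assms(2)] k_range] tableau_box_of[OF assms(2) k_range]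
    by (simp_all add: box)
  moreover have "j' = i' + d"
    using k box in_diagram by (auto simp: content_def shifted_diagram_def)
  ultimately show "k \<in> (\<lambda>i'. T (i', i' + d)) ` {1..<i}"
    using tableau_diagonal_less_iff[OF assms(1,2,3)] k by (auto simp: shifted_diagram_def)
next
  fix k assume "k \<in> (\<lambda>i'. T (i', i' + d)) ` {1..<i}"
  then obtain i' where i': "i' \<in> {1..<i}" "k = T (i', i' + d)" by auto
  have on_diagonal: "(i', i' + d) \<in> shifted_diagram la"
    using shifted_diagram_diagonal_up[OF assms(1,3)] i'(1) by simp
  then have "T (i', i' + d) \<in> {1..sum_list la}"
    using tableau_bij[OF assms(2)] by (auto simp: bij_betw_def)
  then show "k \<in> {k \<in> {1..<T (i, i + d)}. content la T k = d}"
    using tableau_diagonal_less_iff[OF assms(1,2,3) on_diagonal] i' content_tableau[OF assms(2) on_diagonal]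
    by auto
qed

lemma card_earlier_same_content:
  assumes "strict_partition la" and "T \<in> std_shifted_tableaux la" and "(i, j) \<in> shifted_diagram la"
  shows "card {k \<in> {1..<T (i, j)}. content la T k = j - i} = i - 1"
proof -
  define d where "d = j - i"
  have j: "j = i + d" using assms(3) by (simp add: d_def shifted_diagram_def)
  have on_diagonal: "(i', i' + d) \<in> shifted_diagram la" if "i' \<in> {1..<i}" for i'
    using shifted_diagram_diagonal_up[OF assms(1)] assms(3) j that by simp
  have "inj_on (\<lambda>i'. T (i', i' + d)) {1..<i}"
  proof (rule inj_onI)
    fix a b assume "a \<in> {1..<i}" "b \<in> {1..<i}" "T (a, a + d) = T (b, b + d)"
    then have "(a, a + d) = (b, b + d)"
      using on_diagonal bij_betw_imp_inj_on[OF tableau_bij[OF assms(2)]] by (meson inj_onD)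
    then show "a = b" by simp
  qed
  then show ?thesis
    using earlier_same_content_eq_diagonal[OF assms(1,2)] assms(3) by (simp add: j card_image)
qed

lemma box_of_eq_if_content_eq:
  assumes "strict_partition la" and "strict_partition mu"
    and "La \<in> std_shifted_tableaux la" and "Ga \<in> std_shifted_tableaux mu"
    and "sum_list la = n" and "sum_list mu = n"
    and "\<forall>k\<in>{1..n}. content la La k = content mu Ga k" and "k \<in> {1..n}"
  shows "box_of la La k = box_of mu Ga k"
proof -
  obtain i j i' j' where box: "box_of la La k = (i, j)" "box_of mu Ga k = (i', j')"
    by fastforce
  have k_la: "k \<in> {1..sum_list la}" and k_mu: "k \<in> {1..sum_list mu}"
    using assms(5,6,8) by simp_all
  have in_la: "(i, j) \<in> shifted_diagram la" and La_k: "La (i, j) = k"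
    using bij_betw_apply[OF bij_betw_box_of[OF assms(3)] k_la] tableau_box_of[OF assms(3) k_la] box
    by simp_all
  have in_mu: "(i', j') \<in> shifted_diagram mu" and Ga_k: "Ga (i', j') = k"
    using bij_betw_apply[OF bij_betw_box_of[OF assms(4)] k_mu] tableau_box_of[OF assms(4) k_mu] box
    by simp_all
  have "content la La k = content mu Ga k"
    using assms(7,8) by blast
  then have same_content: "j - i = j' - i'"
    using box by (simp add: content_def)
  have "i - 1 = card {k' \<in> {1..<k}. content la La k' = j - i}"
    using card_earlier_same_content[OF assms(1,3) in_la] by (simp only: La_k)
  also have "\<dots> = card {k' \<in> {1..<k}. content mu Ga k' = j' - i'}"
    using assms(7,8) same_content by (intro arg_cong[where f = card]) auto
  also have "\<dots> = i' - 1"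
    using card_earlier_same_content[OF assms(2,4) in_mu] by (simp only: Ga_k)
  finally have "i - 1 = i' - 1" .
  moreover have "1 \<le> i" "i \<le> j" "1 \<le> i'" "i' \<le> j'"
    using in_la in_mu by (auto simp: shifted_diagram_def)
  ultimately have "i = i'" and "j = j'"
    using same_content by linarith+
  then show ?thesis using box by simp
qed

lemma shifted_diagram_eq_image_box_of:
  "T \<in> std_shifted_tableaux la \<Longrightarrow> shifted_diagram la = box_of la T ` {1..sum_list la}"
  using bij_betw_box_of bij_betw_imp_surj_on by metis

lemma shifted_diagram_eq_if_content_eq:
  assumes "strict_partition la" and "strict_partition mu"
    and "La \<in> std_shifted_tableaux la" and "Ga \<in> std_shifted_tableaux mu"
    and "sum_list la = n" and "sum_list mu = n"
    and "\<forall>k\<in>{1..n}. content la La k = content mu Ga k"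
  shows "shifted_diagram la = shifted_diagram mu"
proof -
  have "box_of la La ` {1..n} = box_of mu Ga ` {1..n}"
    using box_of_eq_if_content_eq[OF assms] by (rule image_cong[OF refl])
  then show ?thesis
    using shifted_diagram_eq_image_box_of[OF assms(3)] shifted_diagram_eq_image_box_of[OF assms(4)]
      assms(5,6) by simp
qed

lemma tableau_eq_if_content_eq:
  assumes "strict_partition la" and "strict_partition mu"
    and "La \<in> std_shifted_tableaux la" and "Ga \<in> std_shifted_tableaux mu"
    and "sum_list la = n" and "sum_list mu = n"
    and "\<forall>k\<in>{1..n}. content la La k = content mu Ga k"
  shows "La = Ga"
proof
  fix b
  have diagram: "shifted_diagram la = shifted_diagram mu"
    by (rule shifted_diagram_eq_if_content_eq[OF assms])
  show "La b = Ga b"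
  proof (cases "b \<in> shifted_diagram la")
    case True
    define k where "k = La b"
    have k: "k \<in> {1..n}"
      using True tableau_bij[OF assms(3)] assms(5) by (auto simp: k_def bij_betw_def)
    have "box_of mu Ga k = b"
      using box_of_eq_if_content_eq[OF assms k] box_of_tableau[OF assms(3) True] by (simp add: k_def)
    then have "Ga b = k"
      using tableau_box_of[OF assms(4)] k assms(6) by auto
    then show ?thesis by (simp add: k_def)
  next
    case False
    then show ?thesis using diagram tableau_eq_0[OF assms(3)] tableau_eq_0[OF assms(4)] by simp
  qed
qed

lemma shifted_diagram_diagonal_iff:
  "strict_partition la \<Longrightarrow> (i, i) \<in> shifted_diagram la \<longleftrightarrow> 1 \<le> i \<and> i \<le> length la"
  by (auto simp: strict_partition_def shifted_diagram_def Suc_le_eq)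

lemma shifted_diagram_row_iff:
  "i < length la \<Longrightarrow> (Suc i, Suc i + d) \<in> shifted_diagram la \<longleftrightarrow> d < la ! i"
  by (auto simp: shifted_diagram_def)

lemma strict_partition_eq_if_shifted_diagram_eq:
  assumes "strict_partition la" and "strict_partition mu"
    and "shifted_diagram la = shifted_diagram mu"
  shows "la = mu"
proof (rule nth_equalityI)
  have "1 \<le> i \<and> i \<le> length la \<longleftrightarrow> 1 \<le> i \<and> i \<le> length mu" for i
    using shifted_diagram_diagonal_iff[OF assms(1), of i] shifted_diagram_diagonal_iff[OF assms(2), of i]
      assms(3) by simp
  from this[of "length la"] this[of "length mu"] show "length la = length mu"
    by (cases "length la"; cases "length mu") auto
  fix i assume "i < length la"
  then have "d < la ! i \<longleftrightarrow> d < mu ! i" for d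
    using shifted_diagram_row_iff[of i la d] shifted_diagram_row_iff[of i mu d] assms(3)
      \<open>length la = length mu\<close> by simp
  from this[of "la ! i"] this[of "mu ! i"] show "la ! i = mu ! i" by linarith
qed

lemma content_eq_if_qk_powi_eq:
  assumes "q \<noteq> 0" and "\<forall>m. 0 < m \<longrightarrow> q ^ m \<noteq> 1" and "sqrt_choice q s"
    and "sign_vec n nu1" and "sign_vec n nu2"
    and "\<forall>k\<in>{1..n}. qk q s la La k powi nu1 k = qk q s mu Ga k powi nu2 k"
  shows "\<forall>k\<in>{1..n}. content la La k = content mu Ga k"
  using xval_powi_inj[OF assms(1-3)] assms(4-6) unfolding sign_vec_def qk_eq_xval_content by blast

lemma weight_eq_iff:
  assumes "sum_list la = n" and "sum_list mu = n"
  shows "weight q s la T nu = weight q s mu T' nu'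
    \<longleftrightarrow> (\<forall>k\<in>{1..n}. qk q s la T k powi nu k = qk q s mu T' k powi nu' k)"
proof -
  have "set [1..<n + 1] = {1..n}" by auto
  then show ?thesis using assms by (simp only: weight_def map_eq_conv)
qed

lemma strict_partition_eq_if_weight_eq:
  assumes "q \<noteq> 0" and "\<forall>m. 0 < m \<longrightarrow> q ^ m \<noteq> 1" and "sqrt_choice q s"
    and "strict_partition la" and "strict_partition mu"
    and "sum_list la = n" and "sum_list mu = n"
    and "T \<in> std_shifted_tableaux la" and "T' \<in> std_shifted_tableaux mu"
    and "sign_vec n nu" and "sign_vec n nu'"
    and "weight q s la T nu = weight q s mu T' nu'"
  shows "la = mu"
proof -
  have "\<forall>k\<in>{1..n}. content la T k = content mu T' k"
    using content_eq_if_qk_powi_eq[OF assms(1-3,10,11)] assms(12) weight_eq_iff[OF assms(6,7)]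
    by blast
  then have "shifted_diagram la = shifted_diagram mu"
    by (rule shifted_diagram_eq_if_content_eq[OF assms(4,5,8,9,6,7)])
  then show ?thesis by (rule strict_partition_eq_if_shifted_diagram_eq[OF assms(4,5)])
qed

theorem lemma2p34:
  fixes q :: complex and s :: "nat \<Rightarrow> complex" and la mu :: "nat list" and n :: nat
    and La Ga :: "nat \<times> nat \<Rightarrow> nat" and nu1 nu2 :: "nat \<Rightarrow> int"
  assumes "q \<noteq> 0" and "\<forall>m::nat. 0 < m \<longrightarrow> q ^ m \<noteq> 1"
    and "sqrt_choice q s"
    and "strict_partition la" and "strict_partition mu"
    and "sum_list la = n" and "sum_list mu = n"
    and "La \<in> std_shifted_tableaux la" and "Ga \<in> std_shifted_tableaux mu"
    and "sign_vec n nu1" and "sign_vec n nu2"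
    and "\<forall>k\<in>{1..n}. qk q s la La k powi nu1 k = qk q s mu Ga k powi nu2 k"
  shows "La = Ga \<and> (la \<noteq> mu \<longrightarrow> weights q s la \<inter> weights q s mu = {})"
proof (intro conjI impI)
  show "La = Ga"
    using tableau_eq_if_content_eq[OF assms(4,5,8,9,6,7)]
      content_eq_if_qk_powi_eq[OF assms(1-3,10-12)] .
  show "weights q s la \<inter> weights q s mu = {}" if "la \<noteq> mu"
    using strict_partition_eq_if_weight_eq[OF assms(1-7)] that
    unfolding weights_def assms(6,7) by blast
qed

end
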